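(* Let $(G,D,\star)$ be any probabilistic metric space where $\star$ is a continuous triangle function, and let $\mathbb D:\Pi(G)\times\Pi(G)\to\Delta^+$ be $\mathbb D(f,g)=\sup_{x\in G}f(x)\star g(x)$. Then: (1) $\mathbb D(\delta_a,\delta_b)=D(a,b)$ for all $a,b\in G$; (2) $(\Pi(G),\mathbb D,\star)$ is a complete probabilistic metric space; (3) $\delta(G)=\{\delta_a:a\in G\}$ is dense in $(\Pi(G),\mathbb D,\star)$, i.e. for every $f\in\Pi(G)$ there is a sequence $(a_n)\subset G$ with $\mathbb D(\delta_{a_n},f)\xrightarrow{w}\mathcal H_0$.
   Context: A distribution function is a nondecreasing, left-continuous function $F:[-\infty,+\infty]\to[0,1]$ with $F(-\infty)=0$, $F(+\infty)=1$; $\Delta^+$ is the set of distribution functions with $F(0)=0$, ordered pointwise (a complete lattice with maximum $\mathcal H_0$, $\mathcal H_0(t)=0$ for $t\le0$, $1$ for $t>0$). A triangle function is a binary operation $\star$ on $\Delta^+$ that is commutative, associative, nondecreasing in each argument, with $F\star\mathcal H_0=F$. $F_n\xrightarrow{w}F$ means $F_n(t)\to F(t)$ at every continuity point $t\in\mathbb R$ of $F$; $\star$ is continuous if $F_n\star L_n\xrightarrow{w}F\star L$ whenever $F_n\xrightarrow{w}F$, $L_n\xrightarrow{w}L$. A probabilistic metric space $(G,D,\star)$ consists of a set $G$, a triangle function $\star$ and $D:G\times G\to\Delta^+$ with (i) $D(p,q)=\mathcal H_0$ iff $p=q$; (ii) $D(p,q)=D(q,p)$; (iii) $D(p,q)\star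 D(q,r)\le D(p,r)$. A sequence $(z_n)$ is Cauchy if $D(z_n,z_p)\xrightarrow{w}\mathcal H_0$ as $n,p\to\infty$; the space is complete if for every Cauchy sequence $(z_n)$ there is $z\in G$ with $D(z_n,z)\xrightarrow{w}\mathcal H_0$. A map $f:G\to\Delta^+$ is probabilistic $1$-Lipschitz if $D(x,y)\star f(y)\le f(x)$ for all $x,y$. $\delta_a(y)=D(y,a)$. $\Pi(G)$ is the set of probabilistic $1$-Lipschitz maps $f$ for which there is a Cauchy sequence $(a_n)\subset G$ with $D(a_n,x)\xrightarrow{w}f(x)$ for all $x\in G$. *)

theory Defs
  imports "HOL-Analysis.Analysis"
begin

type_synonym dfun = "ereal \<Rightarrow> real"

definition distribution_fun :: "dfun \<Rightarrow> bool" where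
  "distribution_fun F \<longleftrightarrow> mono F \<and> (\<forall>t. 0 \<le> F t \<and> F t \<le> 1)
     \<and> F (-\<infinity>) = 0 \<and> F \<infinity> = 1
     \<and> (\<forall>t::real. continuous (at_left t) (\<lambda>x. F (ereal x)))"

definition Delta_plus :: "dfun set" where
  "Delta_plus = {F. distribution_fun F \<and> F (ereal 0) = 0}"

definition H0 :: dfun where
  "H0 t = (if t \<le> 0 then 0 else 1)"

definition wconv :: "('i \<Rightarrow> dfun) \<Rightarrow> dfun \<Rightarrow> 'i filter \<Rightarrow> bool" where
  "wconv Fs L Flt \<longleftrightarrow> (\<forall>t::real. isCont (\<lambda>x. L (ereal x)) t \<longrightarrow>
      ((\<lambda>i. Fs i (ereal t)) \<longlongrightarrow> L (ereal t)) Flt)"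

definition triangle_fun :: "(dfun \<Rightarrow> dfun \<Rightarrow> dfun) \<Rightarrow> bool" where
  "triangle_fun st \<longleftrightarrow>
     (\<forall>F\<in>Delta_plus. \<forall>L\<in>Delta_plus. st F L \<in> Delta_plus)
   \<and> (\<forall>F\<in>Delta_plus. \<forall>L\<in>Delta_plus. st F L = st L F)
   \<and> (\<forall>F\<in>Delta_plus. \<forall>L\<in>Delta_plus. \<forall>K\<in>Delta_plus. st (st F L) K = st F (st L K))
   \<and> (\<forall>F\<in>Delta_plus. \<forall>F'\<in>Delta_plus. \<forall>L\<in>Delta_plus. F \<le> F' \<longrightarrow> st F L \<le> st F' L)
   \<and> (\<forall>F\<in>Delta_plus. st F H0 = F)"

definition continuous_triangle_fun :: "(dfun \<Rightarrow> dfun \<Rightarrow> dfun) \<Rightarrow> bool" where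
  "continuous_triangle_fun st \<longleftrightarrow> triangle_fun st \<and>
     (\<forall>Fs Ls F L. (\<forall>n. Fs n \<in> Delta_plus) \<longrightarrow> (\<forall>n. Ls n \<in> Delta_plus) \<longrightarrow>
        F \<in> Delta_plus \<longrightarrow> L \<in> Delta_plus \<longrightarrow>
        wconv Fs F sequentially \<longrightarrow> wconv Ls L sequentially \<longrightarrow>
        wconv (\<lambda>n. st (Fs n) (Ls n)) (st F L) sequentially)"

definition pm_space :: "'a set \<Rightarrow> ('a \<Rightarrow> 'a \<Rightarrow> dfun) \<Rightarrow> (dfun \<Rightarrow> dfun \<Rightarrow> dfun) \<Rightarrow> bool" where
  "pm_space G D st \<longleftrightarrow> triangle_fun st
   \<and> (\<forall>p\<in>G. \<forall>q\<in>G. D p q \<in> Delta_plus)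
   \<and> (\<forall>p\<in>G. \<forall>q\<in>G. D p q = H0 \<longleftrightarrow> p = q)
   \<and> (\<forall>p\<in>G. \<forall>q\<in>G. D p q = D q p)
   \<and> (\<forall>p\<in>G. \<forall>q\<in>G. \<forall>r\<in>G. st (D p q) (D q r) \<le> D p r)"

definition pm_cauchy :: "'a set \<Rightarrow> ('a \<Rightarrow> 'a \<Rightarrow> dfun) \<Rightarrow> (nat \<Rightarrow> 'a) \<Rightarrow> bool" where
  "pm_cauchy G D z \<longleftrightarrow> (\<forall>n. z n \<in> G) \<and>
     wconv (\<lambda>(n, p). D (z n) (z p)) H0 (sequentially \<times>\<^sub>F sequentially)"

definition pm_complete :: "'a set \<Rightarrow> ('a \<Rightarrow> 'a \<Rightarrow> dfun) \<Rightarrow> (dfun \<Rightarrow> dfun \<Rightarrow> dfun) \<Rightarrow> bool" where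
  "pm_complete G D st \<longleftrightarrow> pm_space G D st \<and>
     (\<forall>z. pm_cauchy G D z \<longrightarrow> (\<exists>x\<in>G. wconv (\<lambda>n. D (z n) x) H0 sequentially))"

definition prob_lipschitz :: "'a set \<Rightarrow> ('a \<Rightarrow> 'a \<Rightarrow> dfun) \<Rightarrow> (dfun \<Rightarrow> dfun \<Rightarrow> dfun)
    \<Rightarrow> ('a \<Rightarrow> dfun) \<Rightarrow> bool" where
  "prob_lipschitz G D st f \<longleftrightarrow> (\<forall>x\<in>G. f x \<in> Delta_plus)
     \<and> (\<forall>x\<in>G. \<forall>y\<in>G. st (D x y) (f y) \<le> f x)"

definition pm_delta :: "'a set \<Rightarrow> ('a \<Rightarrow> 'a \<Rightarrow> dfun) \<Rightarrow> 'a \<Rightarrow> ('a \<Rightarrow> dfun)" where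
  "pm_delta G D a = restrict (\<lambda>y. D y a) G"

text \<open>Pi(G); maps are taken extensional on G so that they are determined by their values on G.\<close>
definition Pi_space :: "'a set \<Rightarrow> ('a \<Rightarrow> 'a \<Rightarrow> dfun) \<Rightarrow> (dfun \<Rightarrow> dfun \<Rightarrow> dfun)
    \<Rightarrow> ('a \<Rightarrow> dfun) set" where
  "Pi_space G D st = {f \<in> extensional G. prob_lipschitz G D st f \<and>
     (\<exists>a. pm_cauchy G D a \<and> (\<forall>x\<in>G. wconv (\<lambda>n. D (a n) x) (f x) sequentially))}"

text \<open>Dsup(f,g) = sup over x in G of f(x) star g(x); the supremum in Delta_plus is pointwise.\<close>
definition Dsup :: "'a set \<Rightarrow> (dfun \<Rightarrow> dfun \<Rightarrow> dfun) \<Rightarrow> ('a \<Rightarrow> dfun) \<Rightarrow> ('a \<Rightarrow> dfun) \<Rightarrow> dfun" where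
  "Dsup G st f g = (\<lambda>t. SUP x\<in>G. st (f x) (g x) t)"

end

theory Submission
  imports Defs "HOL-Probability.Helly_Selection"
begin

(*
  Every f in Pi(G) is probabilistic 1-Lipschitz, so the supremum defining Dsup(delta_a, f) is
  attained at a and equals f(a); this gives the isometry, and density follows because f(a_n)
  tends to H0 along any Cauchy sequence (a_n) defining f.  The triangle inequality for Dsup comes
  from approximating Dsup(f, g) from below by f(b_m) * g(b_m) along a sequence (b_m) defining g.
  For completeness, a Cauchy sequence (f_n) in Pi(G) is shadowed by points a_n with f_n(a_n),
  i.e. Dsup(delta_(a_n), f_n), tending to H0.  Hence (a_n) is Cauchy in G; the distributions
  D(a_n, x) then converge weakly (Helly selection, made uniform by the continuity of the triangle
  function at H0), and the resulting limit function is the limit of (f_n) in Pi(G).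
*)

section \<open>Distribution functions and weak convergence\<close>

lemma Delta_plusD:
  assumes "F \<in> Delta_plus"
  shows "mono F" "\<And>t. 0 \<le> F t" "\<And>t. F t \<le> 1" "F (-\<infinity>) = 0" "F \<infinity> = 1"
    "F (ereal 0) = 0" "\<And>t::real. continuous (at_left t) (\<lambda>x. F (ereal x))"
  using assms unfolding Delta_plus_def distribution_fun_def by auto

lemma Delta_plus_mono: "F \<in> Delta_plus \<Longrightarrow> s \<le> t \<Longrightarrow> F s \<le> F t"
  using Delta_plusD(1) monoD by blast

lemma Delta_plus_nonpos: "F \<in> Delta_plus \<Longrightarrow> t \<le> ereal 0 \<Longrightarrow> F t = 0"
  using Delta_plusD(2,6) Delta_plus_mono by (metis antisym)

lemma H0_ereal: "H0 (ereal x) = (if x \<le> 0 then 0 else 1)"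
  by (simp add: H0_def zero_ereal_def)

lemma Delta_plus_le_H0: "F \<in> Delta_plus \<Longrightarrow> F \<le> H0"
  unfolding le_fun_def H0_def
  using Delta_plus_nonpos[of F] Delta_plusD(3)[of F] by (auto simp: zero_ereal_def)

lemma H0_in_Delta_plus: "H0 \<in> Delta_plus"
  unfolding Delta_plus_def distribution_fun_def
proof (intro CollectI conjI allI)
  show "mono H0" unfolding mono_def H0_def by auto
  fix t :: real
  have "eventually (\<lambda>x. H0 (ereal x) = H0 (ereal t)) (at_left t)"
  proof (cases "t \<le> 0")
    case True
    then show ?thesis by (auto simp: eventually_at_left_field H0_ereal intro!: exI[of _ "t - 1"])
  next
    case False
    then show ?thesis by (auto simp: eventually_at_left_field H0_ereal intro!: exI[of _ 0])
  qed
  then show "continuous (at_left t) (\<lambda>x. H0 (ereal x))"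
    unfolding continuous_within by (rule tendsto_eventually)
qed (auto simp: H0_def)

lemma exists_between_notin_countable:
  fixes a b :: real
  assumes "countable N" "a < b"
  obtains s where "a < s" "s < b" "s \<notin> N"
proof -
  have "{a<..<b} - N \<noteq> {}"
    using assms uncountable_open_interval countable_subset by (metis Diff_eq_empty_iff)
  then obtain s where "s \<in> {a<..<b} - N" by blast
  then show ?thesis by (intro that) auto
qed

lemma countable_discontinuities_Delta_plus:
  "F \<in> Delta_plus \<Longrightarrow> countable {t. \<not> isCont (\<lambda>x. F (ereal x)) t}"
  by (rule mono_ctble_discont) (auto simp: mono_def intro: Delta_plus_mono)

lemma continuity_point_between:
  fixes a b :: real
  assumes "F \<in> Delta_plus" "a < b"
  obtains s where "a < s" "s < b" "isCont (\<lambda>x. F (ereal x)) s"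
  using exists_between_notin_countable[OF countable_discontinuities_Delta_plus[OF assms(1)] assms(2)]
  by blast

text \<open>Elements of \<open>Delta_plus\<close> are left-continuous, so they are determined by their values
  on any dense set, in particular on the common continuity points of two of them.\<close>
lemma Delta_plus_le_if_le_at_continuity_points:
  assumes F: "F \<in> Delta_plus" and L: "L \<in> Delta_plus"
    and le: "\<And>t. isCont (\<lambda>x. F (ereal x)) t \<Longrightarrow> isCont (\<lambda>x. L (ereal x)) t
      \<Longrightarrow> F (ereal t) \<le> L (ereal t)"
  shows "F \<le> L"
  unfolding le_fun_def
proof
  fix u :: ereal
  show "F u \<le> L u"
  proof (cases u)
    case (real t)
    show ?thesis
    proof (rule ccontr)
      assume "\<not> F u \<le> L u"
      then have "L (ereal t) < F (ereal t)" using real by simp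
      with Delta_plusD(7)[OF F, of t] have "eventually (\<lambda>x. L (ereal t) < F (ereal x)) (at_left t)"
        unfolding continuous_within by (rule order_tendstoD)
      then obtain b where b: "b < t" "\<And>y. b < y \<Longrightarrow> y < t \<Longrightarrow> L (ereal t) < F (ereal y)"
        by (auto simp: eventually_at_left_field)
      have "countable ({x. \<not> isCont (\<lambda>x. F (ereal x)) x} \<union> {x. \<not> isCont (\<lambda>x. L (ereal x)) x})"
        using countable_discontinuities_Delta_plus F L by blast
      then obtain s where s: "b < s" "s < t"
        "isCont (\<lambda>x. F (ereal x)) s" "isCont (\<lambda>x. L (ereal x)) s"
        using exists_between_notin_countable b(1) by blast
      have "F (ereal s) \<le> L (ereal t)"
        using le[OF s(3,4)] Delta_plus_mono[OF L, of "ereal s" "ereal t"] s(2) by simp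
      then show False using b(2)[OF s(1,2)] by simp
    qed
  qed (use Delta_plusD[OF F] Delta_plusD[OF L] in auto)
qed

lemma wconv_const: "wconv (\<lambda>n. F) F Flt"
  unfolding wconv_def by simp

lemma wconv_compose_filterlim:
  "wconv Fs L F \<Longrightarrow> filterlim g F F' \<Longrightarrow> wconv (\<lambda>i. Fs (g i)) L F'"
  unfolding wconv_def by (auto intro: filterlim_compose)

lemma wconv_limit_le:
  assumes F: "F \<in> Delta_plus" and L: "L \<in> Delta_plus"
    and "wconv Fs F sequentially" "wconv Ls L sequentially"
    and le: "\<And>n. Fs n \<le> Ls n"
  shows "F \<le> L"
proof (rule Delta_plus_le_if_le_at_continuity_points[OF F L])
  fix t assume "isCont (\<lambda>x. F (ereal x)) t" "isCont (\<lambda>x. L (ereal x)) t"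
  then have "(\<lambda>n. Fs n (ereal t)) \<longlonglongrightarrow> F (ereal t)" "(\<lambda>n. Ls n (ereal t)) \<longlonglongrightarrow> L (ereal t)"
    using assms(3,4) unfolding wconv_def by auto
  then show "F (ereal t) \<le> L (ereal t)"
    using le by (intro LIMSEQ_le) (auto simp: le_fun_def)
qed

lemma wconv_le_const:
  "F \<in> Delta_plus \<Longrightarrow> L \<in> Delta_plus \<Longrightarrow> wconv Fs F sequentially \<Longrightarrow> (\<And>n. Fs n \<le> L) \<Longrightarrow> F \<le> L"
  using wconv_limit_le[OF _ _ _ wconv_const] .

text \<open>\<open>near_H0 \<eta> F\<close> says that \<open>F\<close> lies in the basic neighbourhood \<open>N(\<eta>, \<eta>)\<close> of \<open>H0\<close>
  for the strong topology of \<open>Delta_plus\<close>.\<close>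
definition near_H0 :: "real \<Rightarrow> dfun \<Rightarrow> bool" where
  "near_H0 \<eta> F \<longleftrightarrow> 1 - \<eta> < F (ereal \<eta>)"

lemma near_H0_mono: "near_H0 \<eta> F \<Longrightarrow> F \<in> Delta_plus \<Longrightarrow> \<eta> \<le> \<eta>' \<Longrightarrow> near_H0 \<eta>' F"
  unfolding near_H0_def using Delta_plus_mono[of F "ereal \<eta>" "ereal \<eta>'"] by simp

lemma near_H0_H0: "0 < \<eta> \<Longrightarrow> near_H0 \<eta> H0"
  by (simp add: near_H0_def H0_ereal)

lemma near_H0_le: "near_H0 \<eta> F \<Longrightarrow> F \<le> L \<Longrightarrow> near_H0 \<eta> L"
  unfolding near_H0_def le_fun_def by (meson less_le_trans)

lemma wconv_H0_iff:
  assumes DP: "\<And>i. Fs i \<in> Delta_plus"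
  shows "wconv Fs H0 Flt \<longleftrightarrow> (\<forall>\<eta>>0. eventually (\<lambda>i. near_H0 \<eta> (Fs i)) Flt)"
proof
  assume w: "wconv Fs H0 Flt"
  show "\<forall>\<eta>>0. eventually (\<lambda>i. near_H0 \<eta> (Fs i)) Flt"
  proof (intro allI impI)
    fix \<eta> :: real assume \<eta>: "\<eta> > 0"
    have "eventually (\<lambda>x. H0 (ereal x) = 1) (nhds \<eta>)"
      using \<eta> eventually_nhds_in_open[of "{0<..}" \<eta>] by (auto elim!: eventually_mono simp: H0_ereal)
    then have "isCont (\<lambda>x. H0 (ereal x)) \<eta>"
      unfolding isCont_def using \<eta>
      by (auto simp: H0_ereal intro: tendsto_eventually eventually_at_filter[THEN iffD2] eventually_mono)
    then have "((\<lambda>i. Fs i (ereal \<eta>)) \<longlongrightarrow> 1) Flt"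
      using w \<eta> unfolding wconv_def by (auto simp: H0_ereal)
    then show "eventually (\<lambda>i. near_H0 \<eta> (Fs i)) Flt"
      unfolding near_H0_def using \<eta> by (intro order_tendstoD) auto
  qed
next
  assume H: "\<forall>\<eta>>0. eventually (\<lambda>i. near_H0 \<eta> (Fs i)) Flt"
  show "wconv Fs H0 Flt" unfolding wconv_def
  proof (intro allI impI)
    fix t :: real
    show "((\<lambda>i. Fs i (ereal t)) \<longlongrightarrow> H0 (ereal t)) Flt"
    proof (cases "t \<le> 0")
      case True
      then show ?thesis using Delta_plus_nonpos[OF DP] by (simp add: H0_ereal)
    next
      case False
      show ?thesis unfolding tendsto_iff
      proof (intro allI impI)
        fix e :: real assume "e > 0"
        then have "eventually (\<lambda>i. near_H0 (min t e) (Fs i)) Flt" using H False by simp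
        then show "eventually (\<lambda>i. dist (Fs i (ereal t)) (H0 (ereal t)) < e) Flt"
        proof (rule eventually_mono)
          fix i assume "near_H0 (min t e) (Fs i)"
          then have "near_H0 t (Fs i)" "near_H0 e (Fs i)"
            using near_H0_mono[OF _ DP] by auto
          then show "dist (Fs i (ereal t)) (H0 (ereal t)) < e"
            using False Delta_plusD(3)[OF DP[of i], of "ereal t"] Delta_plus_mono[OF DP[of i], of "ereal e" "ereal t"]
            by (cases "e \<le> t") (auto simp: near_H0_def H0_ereal dist_real_def)
        qed
      qed
    qed
  qed
qed

lemma wconv_H0I:
  assumes "\<And>k. Fs k \<in> Delta_plus" "r \<longlonglongrightarrow> 0" "\<And>k. near_H0 (r k) (Fs k)"
  shows "wconv Fs H0 sequentially"
  unfolding wconv_H0_iff[OF assms(1)]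
proof (intro allI impI)
  fix \<eta> :: real assume "\<eta> > 0"
  with assms(2) have "eventually (\<lambda>k. r k < \<eta>) sequentially" by (rule order_tendstoD)
  then show "eventually (\<lambda>k. near_H0 \<eta> (Fs k)) sequentially"
    by eventually_elim (rule near_H0_mono[OF assms(3) assms(1)], simp)
qed

section \<open>Helly selection in \<open>Delta_plus\<close>\<close>

lemma continuous_at_right_reflect:
  fixes f :: "real \<Rightarrow> real"
  assumes "continuous (at_left (-x)) f"
  shows "continuous (at_right x) (\<lambda>y. - f (-y))"
proof -
  have "((\<lambda>z. - f (- (- z))) \<longlongrightarrow> - f (-x)) (at_left (-x))"
    using assms by (simp add: continuous_within tendsto_minus)
  then show ?thesis
    unfolding continuous_within by (subst at_right_minus) (simp add: filterlim_filtermap)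
qed

lemma continuous_at_left_reflect:
  fixes f :: "real \<Rightarrow> real"
  assumes "continuous (at_right (-x)) f"
  shows "continuous (at_left x) (\<lambda>y. - f (-y))"
proof -
  have "((\<lambda>z. - f (- (- z))) \<longlongrightarrow> - f (-x)) (at_right (-x))"
    using assms by (simp add: continuous_within tendsto_minus)
  then show ?thesis
    unfolding continuous_within by (subst at_left_minus) (simp add: filterlim_filtermap)
qed

text \<open>Helly's selection theorem in the library is stated for right-continuous functions on the
  reals; distribution functions are left-continuous and live on the extended reals, so we pass
  through the reflection \<open>x \<mapsto> - F (- x)\<close>.\<close>
definition reflect_dfun :: "(real \<Rightarrow> real) \<Rightarrow> dfun" where
  "reflect_dfun F u = (if u = \<infinity> then 1 else if u = -\<infinity> then 0 else - F (- real_of_ereal u))"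

lemma reflect_dfun_ereal [simp]: "reflect_dfun F (ereal t) = - F (- t)"
  by (simp add: reflect_dfun_def)

lemma reflect_dfun_in_Delta_plus:
  fixes F :: "real \<Rightarrow> real"
  assumes mono: "mono F" and rcont: "\<And>x. continuous (at_right x) F"
    and bounds: "\<And>x. - 1 \<le> F x" "\<And>x. F x \<le> 0" and "F 0 = 0"
  shows "reflect_dfun F \<in> Delta_plus"
  unfolding Delta_plus_def distribution_fun_def
proof (intro CollectI conjI allI)
  show "mono (reflect_dfun F)" unfolding mono_def
  proof (intro allI impI)
    fix u v :: ereal assume "u \<le> v"
    then show "reflect_dfun F u \<le> reflect_dfun F v"
      using bounds mono by (cases u; cases v) (auto simp: reflect_dfun_def monoD)
  qed
  fix t :: real
  show "continuous (at_left t) (\<lambda>x. reflect_dfun F (ereal x))"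
    using continuous_at_left_reflect[OF rcont[of "-t"]] by simp
qed (use bounds \<open>F 0 = 0\<close> in \<open>auto simp: reflect_dfun_def zero_ereal_def\<close>)

lemma Delta_plus_Helly_selection:
  fixes Ls :: "nat \<Rightarrow> dfun"
  assumes Ls: "\<And>n. Ls n \<in> Delta_plus"
  obtains s L where "strict_mono s" "L \<in> Delta_plus" "wconv (\<lambda>n. Ls (s n)) L sequentially"
proof -
  define g where "g n x = - Ls n (ereal (-x))" for n x
  have "continuous (at_right x) (g n)" for n x
    unfolding g_def using continuous_at_right_reflect[OF Delta_plusD(7)[OF Ls[of n], of "-x"]] by simp
  moreover have "mono (g n)" for n
    unfolding g_def mono_def using Delta_plus_mono[OF Ls] by auto
  moreover have "\<bar>g n x\<bar> \<le> 1" for n x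
    unfolding g_def using Delta_plusD(2,3)[OF Ls] by (simp add: abs_le_iff)
  ultimately obtain s F where s: "strict_mono s" and rcont: "\<And>x. continuous (at_right x) F"
    and mono: "mono F" and bound: "\<And>x. \<bar>F x\<bar> \<le> 1"
    and lim: "\<And>x. isCont F x \<Longrightarrow> (\<lambda>n. g (s n) x) \<longlonglongrightarrow> F x"
    using Helly_selection[of g 1] by blast
  have discont: "countable {x. \<not> isCont F x}" by (rule mono_ctble_discont[OF mono])
  have nonpos: "F x \<le> 0" for x
  proof -
    obtain y where y: "x < y" "isCont F y"
      using exists_between_notin_countable[OF discont, of x "x + 1"] by auto
    have "F y \<le> 0"
      using lim[OF y(2)] by (rule LIMSEQ_le_const2) (auto simp: g_def intro: Delta_plusD(2)[OF Ls])
    then show ?thesis using mono y(1) by (meson monoD less_imp_le order_trans)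
  qed
  have "F 0 = 0"
  proof (rule ccontr)
    assume "F 0 \<noteq> 0"
    then have "F 0 < 0" using nonpos[of 0] by simp
    then have "eventually (\<lambda>y. F y < 0) (at_right 0)"
      using rcont[of 0] by (auto simp: continuous_within intro: order_tendstoD)
    then obtain b where b: "b > 0" "\<And>y. 0 < y \<Longrightarrow> y < b \<Longrightarrow> F y < 0"
      by (auto simp: eventually_at_right_field)
    obtain y where y: "0 < y" "y < b" "isCont F y"
      using exists_between_notin_countable[OF discont b(1)] by auto
    have "(\<lambda>n. 0::real) \<longlonglongrightarrow> F y"
      using lim[OF y(3)] y(1) by (simp add: g_def Delta_plus_nonpos[OF Ls])
    then show False using b(2)[OF y(1,2)] by (simp add: LIMSEQ_const_iff)
  qed
  then have L: "reflect_dfun F \<in> Delta_plus"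
    using bound nonpos by (intro reflect_dfun_in_Delta_plus[OF mono rcont]) (auto simp: abs_le_iff)
  have "wconv (\<lambda>n. Ls (s n)) (reflect_dfun F) sequentially"
    unfolding wconv_def
  proof (intro allI impI)
    fix t assume "isCont (\<lambda>x. reflect_dfun F (ereal x)) t"
    then have "isCont (\<lambda>x. F (- x)) t"
      using isCont_minus[of t "\<lambda>x. - F (- x)"] by simp
    then have "isCont ((\<lambda>x. F (- x)) \<circ> uminus) (-t)"
      by (intro continuous_at_compose) simp_all
    then have "isCont F (-t)" by (simp add: o_def)
    from tendsto_minus[OF lim[OF this]]
    show "(\<lambda>n. Ls (s n) (ereal t)) \<longlonglongrightarrow> reflect_dfun F (ereal t)" by (simp add: g_def)
  qed
  then show ?thesis using that s L by blast
qed

section \<open>Triangle functions\<close>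

lemma triangle_fun_closed: "triangle_fun st \<Longrightarrow> F \<in> Delta_plus \<Longrightarrow> L \<in> Delta_plus \<Longrightarrow> st F L \<in> Delta_plus"
  unfolding triangle_fun_def by blast

lemma triangle_fun_commute: "triangle_fun st \<Longrightarrow> F \<in> Delta_plus \<Longrightarrow> L \<in> Delta_plus \<Longrightarrow> st F L = st L F"
  unfolding triangle_fun_def by blast

lemma triangle_fun_assoc:
  "triangle_fun st \<Longrightarrow> F \<in> Delta_plus \<Longrightarrow> L \<in> Delta_plus \<Longrightarrow> K \<in> Delta_plus
    \<Longrightarrow> st (st F L) K = st F (st L K)"
  unfolding triangle_fun_def by blast

lemma triangle_fun_H0_right: "triangle_fun st \<Longrightarrow> F \<in> Delta_plus \<Longrightarrow> st F H0 = F"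
  unfolding triangle_fun_def by blast

lemma triangle_fun_H0_left: "triangle_fun st \<Longrightarrow> F \<in> Delta_plus \<Longrightarrow> st H0 F = F"
  using triangle_fun_H0_right triangle_fun_commute H0_in_Delta_plus by metis

lemma triangle_fun_mono_left:
  "triangle_fun st \<Longrightarrow> F \<in> Delta_plus \<Longrightarrow> F' \<in> Delta_plus \<Longrightarrow> L \<in> Delta_plus
    \<Longrightarrow> F \<le> F' \<Longrightarrow> st F L \<le> st F' L"
  unfolding triangle_fun_def by blast

lemma triangle_fun_le_left: "triangle_fun st \<Longrightarrow> F \<in> Delta_plus \<Longrightarrow> L \<in> Delta_plus \<Longrightarrow> st F L \<le> F"
  using triangle_fun_mono_left[of st L H0 F] Delta_plus_le_H0[of L]
  by (simp add: H0_in_Delta_plus triangle_fun_commute triangle_fun_H0_left)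

lemma continuous_triangle_fun_triangle_fun: "continuous_triangle_fun st \<Longrightarrow> triangle_fun st"
  unfolding continuous_triangle_fun_def by blast

lemma continuous_triangle_funD:
  assumes "continuous_triangle_fun st" "\<And>n. Fs n \<in> Delta_plus" "\<And>n. Ls n \<in> Delta_plus"
    "F \<in> Delta_plus" "L \<in> Delta_plus" "wconv Fs F sequentially" "wconv Ls L sequentially"
  shows "wconv (\<lambda>n. st (Fs n) (Ls n)) (st F L) sequentially"
  using assms unfolding continuous_triangle_fun_def by blast

lemma near_H0_star:
  assumes ct: "continuous_triangle_fun st" and e: "e > 0"
  shows "\<exists>\<eta>>0. \<forall>F\<in>Delta_plus. \<forall>L\<in>Delta_plus. near_H0 \<eta> F \<longrightarrow> near_H0 \<eta> L \<longrightarrow> near_H0 e (st F L)"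
proof (rule ccontr)
  define r where "r k = inverse (real (Suc k))" for k
  assume "\<not> ?thesis"
  then have "\<forall>k. \<exists>F L. F \<in> Delta_plus \<and> L \<in> Delta_plus \<and> near_H0 (r k) F \<and> near_H0 (r k) L
      \<and> \<not> near_H0 e (st F L)"
    unfolding r_def by (metis inverse_positive_iff_positive of_nat_0_less_iff zero_less_Suc)
  then obtain Fs Ls where FL: "\<And>k. Fs k \<in> Delta_plus" "\<And>k. Ls k \<in> Delta_plus"
    "\<And>k. near_H0 (r k) (Fs k)" "\<And>k. near_H0 (r k) (Ls k)" "\<And>k. \<not> near_H0 e (st (Fs k) (Ls k))"
    by metis
  have "r \<longlonglongrightarrow> 0" unfolding r_def by (rule LIMSEQ_inverse_real_of_nat)
  then have "wconv Fs H0 sequentially" "wconv Ls H0 sequentially"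
    using FL by (auto intro: wconv_H0I)
  then have "wconv (\<lambda>k. st (Fs k) (Ls k)) (st H0 H0) sequentially"
    using FL by (intro continuous_triangle_funD[OF ct]) (auto simp: H0_in_Delta_plus)
  then have "eventually (\<lambda>k. near_H0 e (st (Fs k) (Ls k))) sequentially"
    using wconv_H0_iff[of "\<lambda>k. st (Fs k) (Ls k)"] e FL(1,2)
      triangle_fun_closed[OF continuous_triangle_fun_triangle_fun[OF ct]]
      triangle_fun_H0_right[OF continuous_triangle_fun_triangle_fun[OF ct] H0_in_Delta_plus]
    by auto
  then show False using FL(5) by (auto simp: eventually_sequentially)
qed

text \<open>A quantitative form of \<open>st H0 L = L\<close>, uniform in \<open>L\<close>; it is where Helly's selection
  theorem enters.\<close>
lemma near_H0_star_ge:
  assumes ct: "continuous_triangle_fun st" and "t < t'" and e: "e > 0"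
  shows "\<exists>\<eta>>0. \<forall>F\<in>Delta_plus. \<forall>L\<in>Delta_plus. near_H0 \<eta> F \<longrightarrow> L (ereal t) - e \<le> st F L (ereal t')"
proof (rule ccontr)
  have tf: "triangle_fun st" by (rule continuous_triangle_fun_triangle_fun[OF ct])
  define r where "r k = inverse (real (Suc k))" for k
  assume "\<not> ?thesis"
  then have "\<forall>k. \<exists>F L. F \<in> Delta_plus \<and> L \<in> Delta_plus \<and> near_H0 (r k) F
      \<and> st F L (ereal t') < L (ereal t) - e"
    unfolding r_def by (metis inverse_positive_iff_positive of_nat_0_less_iff zero_less_Suc not_le)
  then obtain Fs Ls where FL: "\<And>k. Fs k \<in> Delta_plus" "\<And>k. Ls k \<in> Delta_plus"
    "\<And>k. near_H0 (r k) (Fs k)" "\<And>k. st (Fs k) (Ls k) (ereal t') < Ls k (ereal t) - e"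
    by metis
  obtain s L where s: "strict_mono s" and L: "L \<in> Delta_plus"
    and wL: "wconv (\<lambda>n. Ls (s n)) L sequentially"
    using Delta_plus_Helly_selection[of Ls] FL(2) by blast
  have "(\<lambda>n. r (s n)) \<longlonglongrightarrow> 0"
    using LIMSEQ_subseq_LIMSEQ[OF LIMSEQ_inverse_real_of_nat s] by (simp add: r_def o_def)
  then have "wconv (\<lambda>n. Fs (s n)) H0 sequentially"
    using FL by (intro wconv_H0I[where r = "\<lambda>n. r (s n)"]) auto
  then have "wconv (\<lambda>n. st (Fs (s n)) (Ls (s n))) (st H0 L) sequentially"
    using FL L H0_in_Delta_plus by (intro continuous_triangle_funD[OF ct _ _ _ _ _ wL]) auto
  then have wS: "wconv (\<lambda>n. st (Fs (s n)) (Ls (s n))) L sequentially"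
    using triangle_fun_H0_left[OF tf L] by simp
  obtain \<tau>2 where \<tau>2: "t < \<tau>2" "\<tau>2 < t'" "isCont (\<lambda>x. L (ereal x)) \<tau>2"
    using continuity_point_between[OF L \<open>t < t'\<close>] .
  obtain \<tau>1 where \<tau>1: "t < \<tau>1" "\<tau>1 < \<tau>2" "isCont (\<lambda>x. L (ereal x)) \<tau>1"
    using continuity_point_between[OF L \<tau>2(1)] .
  have "(\<lambda>n. Ls (s n) (ereal \<tau>1)) \<longlonglongrightarrow> L (ereal \<tau>1)"
    "(\<lambda>n. st (Fs (s n)) (Ls (s n)) (ereal \<tau>2)) \<longlonglongrightarrow> L (ereal \<tau>2)"
    using wL wS \<tau>1 \<tau>2 unfolding wconv_def by auto
  then have "eventually (\<lambda>n. Ls (s n) (ereal \<tau>1) < L (ereal \<tau>1) + e / 2) sequentially"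
    "eventually (\<lambda>n. L (ereal \<tau>2) - e / 2 < st (Fs (s n)) (Ls (s n)) (ereal \<tau>2)) sequentially"
    using e by (auto intro: order_tendstoD)
  then obtain n where n: "Ls (s n) (ereal \<tau>1) < L (ereal \<tau>1) + e / 2"
    "L (ereal \<tau>2) - e / 2 < st (Fs (s n)) (Ls (s n)) (ereal \<tau>2)"
    by (metis (mono_tags, lifting) eventually_conj eventually_sequentially order_refl)
  have "Ls (s n) (ereal t) \<le> Ls (s n) (ereal \<tau>1)"
    "L (ereal \<tau>1) \<le> L (ereal \<tau>2)"
    "st (Fs (s n)) (Ls (s n)) (ereal \<tau>2) \<le> st (Fs (s n)) (Ls (s n)) (ereal t')"
    using \<tau>1 \<tau>2 FL L by (auto intro!: Delta_plus_mono triangle_fun_closed[OF tf])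
  then show False using n FL(4)[of "s n"] by linarith
qed

section \<open>Probabilistic metric spaces\<close>

lemma pm_spaceD:
  assumes "pm_space G D st"
  shows "triangle_fun st" "\<And>p q. p \<in> G \<Longrightarrow> q \<in> G \<Longrightarrow> D p q \<in> Delta_plus"
    "\<And>p q. p \<in> G \<Longrightarrow> q \<in> G \<Longrightarrow> D p q = H0 \<longleftrightarrow> p = q"
    "\<And>p q. p \<in> G \<Longrightarrow> q \<in> G \<Longrightarrow> D p q = D q p"
    "\<And>p q r. p \<in> G \<Longrightarrow> q \<in> G \<Longrightarrow> r \<in> G \<Longrightarrow> st (D p q) (D q r) \<le> D p r"
  using assms unfolding pm_space_def by metis+

lemma pm_cauchy_in: "pm_cauchy G D a \<Longrightarrow> a n \<in> G"
  unfolding pm_cauchy_def by blast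

lemma pm_cauchy_iff_wconv:
  assumes "pm_space G D st" "\<And>n. a n \<in> G"
  shows "pm_cauchy G D a \<longleftrightarrow> wconv (\<lambda>i. D (a (fst i)) (a (snd i))) H0 (sequentially \<times>\<^sub>F sequentially)"
  using assms unfolding pm_cauchy_def by (simp add: case_prod_beta')

lemma pm_cauchy_near_H0:
  assumes pm: "pm_space G D st" and a: "pm_cauchy G D a" and "\<eta> > 0"
  obtains N where "\<And>n p. n \<ge> N \<Longrightarrow> p \<ge> N \<Longrightarrow> near_H0 \<eta> (D (a n) (a p))"
proof -
  have "\<And>i. D (a (fst i)) (a (snd i)) \<in> Delta_plus"
    using pm_spaceD(2)[OF pm] pm_cauchy_in[OF a] by blast
  from a[unfolded pm_cauchy_iff_wconv[OF pm pm_cauchy_in[OF a]] wconv_H0_iff[OF this]] \<open>\<eta> > 0\<close>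
  have "eventually (\<lambda>i. near_H0 \<eta> (D (a (fst i)) (a (snd i)))) (sequentially \<times>\<^sub>F sequentially)"
    by blast
  then show ?thesis using that unfolding eventually_prod_sequentially by auto
qed

lemma pm_wconv_H0_trans:
  assumes pm: "pm_space P Dist st" and ct: "continuous_triangle_fun st"
    and in_P: "\<And>i. x i \<in> P" "\<And>i. y i \<in> P" "\<And>i. z i \<in> P"
    and xy: "wconv (\<lambda>i. Dist (x i) (y i)) H0 F" and yz: "wconv (\<lambda>i. Dist (y i) (z i)) H0 F"
  shows "wconv (\<lambda>i. Dist (x i) (z i)) H0 F"
proof -
  note DP = pm_spaceD(2)[OF pm in_P(1,2)] pm_spaceD(2)[OF pm in_P(2,3)] pm_spaceD(2)[OF pm in_P(1,3)]
  show ?thesis unfolding wconv_H0_iff[OF DP(3)]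
  proof (intro allI impI)
    fix \<eta> :: real assume "\<eta> > 0"
    then obtain \<eta>' where "\<eta>' > 0"
      and star: "\<And>F L. F \<in> Delta_plus \<Longrightarrow> L \<in> Delta_plus \<Longrightarrow> near_H0 \<eta>' F \<Longrightarrow> near_H0 \<eta>' L
        \<Longrightarrow> near_H0 \<eta> (st F L)"
      using near_H0_star[OF ct] by blast
    with xy yz have "eventually (\<lambda>i. near_H0 \<eta>' (Dist (x i) (y i)) \<and> near_H0 \<eta>' (Dist (y i) (z i))) F"
      unfolding wconv_H0_iff[OF DP(1)] wconv_H0_iff[OF DP(2)] by (simp add: eventually_conj)
    then show "eventually (\<lambda>i. near_H0 \<eta> (Dist (x i) (z i))) F"
    proof eventually_elim
      case (elim i)
      then have "near_H0 \<eta> (st (Dist (x i) (y i)) (Dist (y i) (z i)))" by (intro star DP) auto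
      then show ?case by (rule near_H0_le) (rule pm_spaceD(5)[OF pm in_P])
    qed
  qed
qed

lemma pm_cauchy_if_asymptotic:
  assumes pm: "pm_space P Dist st" and ct: "continuous_triangle_fun st"
    and y: "pm_cauchy P Dist y" and x: "\<And>n. x n \<in> P"
    and xy: "wconv (\<lambda>n. Dist (x n) (y n)) H0 sequentially"
  shows "pm_cauchy P Dist x"
proof -
  let ?F = "sequentially \<times>\<^sub>F sequentially"
  have yP: "\<And>n. y n \<in> P" using pm_cauchy_in[OF y] .
  have xy1: "wconv (\<lambda>i. Dist (x (fst i)) (y (fst i))) H0 ?F"
    using xy filterlim_fst by (rule wconv_compose_filterlim)
  have yy: "wconv (\<lambda>i. Dist (y (fst i)) (y (snd i))) H0 ?F"
    using pm_cauchy_iff_wconv[where a = y, OF pm yP] y ..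
  have yx2: "wconv (\<lambda>i. Dist (y (snd i)) (x (snd i))) H0 ?F"
    using wconv_compose_filterlim[OF xy filterlim_snd] pm_spaceD(4)[OF pm x yP] by simp
  have xy2: "wconv (\<lambda>i. Dist (x (fst i)) (y (snd i))) H0 ?F"
    by (rule pm_wconv_H0_trans[OF pm ct _ _ _ xy1 yy]) (simp_all add: x yP)
  have "wconv (\<lambda>i. Dist (x (fst i)) (x (snd i))) H0 ?F"
    by (rule pm_wconv_H0_trans[OF pm ct _ _ _ xy2 yx2]) (simp_all add: x yP)
  then show ?thesis by (rule pm_cauchy_iff_wconv[where a = x, OF pm x, THEN iffD2])
qed

lemma continuity_points_around:
  assumes U: "U \<in> Delta_plus" and cont: "isCont (\<lambda>x. U (ereal x)) t" and "e > 0"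
  obtains \<tau> \<tau>' where "\<tau> < t" "isCont (\<lambda>x. U (ereal x)) \<tau>" "t < \<tau>'" "isCont (\<lambda>x. U (ereal x)) \<tau>'"
    "\<bar>U (ereal \<tau>) - U (ereal t)\<bar> < e" "\<bar>U (ereal \<tau>') - U (ereal t)\<bar> < e"
proof -
  obtain \<delta> where "\<delta> > 0"
    and \<delta>: "\<And>y. y \<noteq> t \<Longrightarrow> norm (y - t) < \<delta> \<Longrightarrow> norm (U (ereal y) - U (ereal t)) < e"
    using cont[unfolded isCont_def LIM_eq, rule_format, OF \<open>e > 0\<close>] by blast
  then have "t - \<delta> < t" "t < t + \<delta>" by simp_all
  obtain \<tau> where \<tau>: "t - \<delta> < \<tau>" "\<tau> < t" "isCont (\<lambda>x. U (ereal x)) \<tau>"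
    by (rule continuity_point_between[OF U \<open>t - \<delta> < t\<close>])
  obtain \<tau>' where \<tau>': "t < \<tau>'" "\<tau>' < t + \<delta>" "isCont (\<lambda>x. U (ereal x)) \<tau>'"
    by (rule continuity_point_between[OF U \<open>t < t + \<delta>\<close>])
  have "norm (\<tau> - t) < \<delta>" "norm (\<tau>' - t) < \<delta>" using \<tau> \<tau>' by simp_all
  then have "\<bar>U (ereal \<tau>) - U (ereal t)\<bar> < e" "\<bar>U (ereal \<tau>') - U (ereal t)\<bar> < e"
    using \<delta>[of \<tau>] \<delta>[of \<tau>'] \<tau>(2) \<tau>'(1) by simp_all
  then show ?thesis by (rule that[OF \<tau>(2,3) \<tau>'(1,3)])
qed

text \<open>A Cauchy condition for weak convergence: by Helly's theorem some subsequence converges,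
  and the condition, applied at continuity points \<open>\<tau> < t < \<tau>'\<close> of the limit close to \<open>t\<close>,
  pins down the whole sequence at \<open>t\<close>.\<close>
lemma wconv_if_Cauchy_like:
  fixes u :: "nat \<Rightarrow> dfun"
  assumes u: "\<And>n. u n \<in> Delta_plus"
    and cauchy: "\<And>t t' e. t < t' \<Longrightarrow> e > 0 \<Longrightarrow> \<exists>N. \<forall>n\<ge>N. \<forall>p\<ge>N. u p (ereal t) - e \<le> u n (ereal t')"
  obtains U where "U \<in> Delta_plus" "wconv u U sequentially"
proof -
  obtain s U where s: "strict_mono s" and U: "U \<in> Delta_plus"
    and wU: "wconv (\<lambda>n. u (s n)) U sequentially"
    by (rule Delta_plus_Helly_selection[OF u])
  have "wconv u U sequentially" unfolding wconv_def
  proof (intro allI impI)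
    fix t assume cont: "isCont (\<lambda>x. U (ereal x)) t"
    show "(\<lambda>n. u n (ereal t)) \<longlonglongrightarrow> U (ereal t)" unfolding tendsto_iff
    proof (intro allI impI)
      fix e :: real assume "e > 0"
      then have e4: "e / 4 > 0" by simp
      obtain \<tau> \<tau>' where \<tau>: "\<tau> < t" "isCont (\<lambda>x. U (ereal x)) \<tau>"
        and \<tau>': "t < \<tau>'" "isCont (\<lambda>x. U (ereal x)) \<tau>'"
        and U\<tau>: "\<bar>U (ereal \<tau>) - U (ereal t)\<bar> < e / 4" "\<bar>U (ereal \<tau>') - U (ereal t)\<bar> < e / 4"
        by (rule continuity_points_around[OF U cont e4])
      obtain N1 where N1: "\<And>n p. n \<ge> N1 \<Longrightarrow> p \<ge> N1 \<Longrightarrow> u p (ereal \<tau>) - e / 4 \<le> u n (ereal t)"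
        using cauchy[OF \<tau>(1) e4] by blast
      obtain N2 where N2: "\<And>n p. n \<ge> N2 \<Longrightarrow> p \<ge> N2 \<Longrightarrow> u p (ereal t) - e / 4 \<le> u n (ereal \<tau>')"
        using cauchy[OF \<tau>'(1) e4] by blast
      have "(\<lambda>j. u (s j) (ereal \<tau>)) \<longlonglongrightarrow> U (ereal \<tau>)" "(\<lambda>j. u (s j) (ereal \<tau>')) \<longlonglongrightarrow> U (ereal \<tau>')"
        using wU \<tau>(2) \<tau>'(2) unfolding wconv_def by auto
      then have "eventually (\<lambda>j. \<bar>u (s j) (ereal \<tau>) - U (ereal \<tau>)\<bar> < e / 4
          \<and> \<bar>u (s j) (ereal \<tau>') - U (ereal \<tau>')\<bar> < e / 4) sequentially"
        unfolding dist_real_def[symmetric] by (intro eventually_conj tendstoD e4)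
      then obtain J where J: "\<And>j. j \<ge> J \<Longrightarrow> \<bar>u (s j) (ereal \<tau>) - U (ereal \<tau>)\<bar> < e / 4
          \<and> \<bar>u (s j) (ereal \<tau>') - U (ereal \<tau>')\<bar> < e / 4"
        unfolding eventually_sequentially by blast
      show "eventually (\<lambda>n. dist (u n (ereal t)) (U (ereal t)) < e) sequentially"
        unfolding eventually_sequentially
      proof (intro exI allI impI)
        fix n assume n: "n \<ge> max N1 N2"
        define j where "j = max J n"
        have "s j \<ge> n" "j \<ge> J" using seq_suble[OF s, of j] by (auto simp: j_def)
        with n have "u (s j) (ereal \<tau>) - e / 4 \<le> u n (ereal t)" "u n (ereal t) - e / 4 \<le> u (s j) (ereal \<tau>')"
          using N1[of n "s j"] N2[of "s j" n] by auto
        then show "dist (u n (ereal t)) (U (ereal t)) < e"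
          using J[OF \<open>j \<ge> J\<close>] U\<tau>
          unfolding dist_real_def abs_less_iff by linarith
      qed
    qed
  qed
  with U show ?thesis by (rule that)
qed

lemma pm_cauchy_wconv:
  assumes pm: "pm_space G D st" and ct: "continuous_triangle_fun st"
    and a: "pm_cauchy G D a" and x: "x \<in> G"
  obtains F where "F \<in> Delta_plus" "wconv (\<lambda>n. D (a n) x) F sequentially"
proof -
  have aG: "\<And>n. a n \<in> G" by (rule pm_cauchy_in[OF a])
  have DP: "\<And>n. D (a n) x \<in> Delta_plus" using pm_spaceD(2)[OF pm aG x] .
  have "\<exists>N. \<forall>n\<ge>N. \<forall>p\<ge>N. D (a p) x (ereal t) - e \<le> D (a n) x (ereal t')"
    if tt': "t < t'" and e: "e > 0" for t t' e
  proof -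
    obtain \<eta> where "\<eta> > 0" and \<eta>: "\<forall>F\<in>Delta_plus. \<forall>L\<in>Delta_plus. near_H0 \<eta> F
        \<longrightarrow> L (ereal t) - e \<le> st F L (ereal t')"
      using near_H0_star_ge[OF ct tt' e] by blast
    then obtain N where N: "\<And>n p. n \<ge> N \<Longrightarrow> p \<ge> N \<Longrightarrow> near_H0 \<eta> (D (a n) (a p))"
      using pm_cauchy_near_H0[OF pm a] by blast
    have "D (a p) x (ereal t) - e \<le> D (a n) x (ereal t')" if "n \<ge> N" "p \<ge> N" for n p
    proof -
      have "D (a p) x (ereal t) - e \<le> st (D (a n) (a p)) (D (a p) x) (ereal t')"
        using \<eta>[rule_format, OF pm_spaceD(2)[OF pm aG aG] DP N[OF that]] .
      also have "\<dots> \<le> D (a n) x (ereal t')"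
        using pm_spaceD(5)[OF pm aG aG x, of n p] by (simp add: le_fun_def)
      finally show ?thesis .
    qed
    then show ?thesis by blast
  qed
  then show ?thesis by (rule wconv_if_Cauchy_like[of "\<lambda>n. D (a n) x", OF DP _ that])
qed

section \<open>The space \<open>Pi_space\<close> of limit functions\<close>

lemma Pi_spaceD:
  assumes "f \<in> Pi_space G D st"
  shows "f \<in> extensional G" "\<And>x. x \<in> G \<Longrightarrow> f x \<in> Delta_plus"
    "\<And>x y. x \<in> G \<Longrightarrow> y \<in> G \<Longrightarrow> st (D x y) (f y) \<le> f x"
  using assms unfolding Pi_space_def prob_lipschitz_def by blast+

lemma Pi_space_defining_sequence:
  assumes "f \<in> Pi_space G D st"
  obtains a where "pm_cauchy G D a" "\<And>x. x \<in> G \<Longrightarrow> wconv (\<lambda>n. D (a n) x) (f x) sequentially"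
proof -
  from assms obtain a where a: "pm_cauchy G D a" and w: "\<forall>x\<in>G. wconv (\<lambda>n. D (a n) x) (f x) sequentially"
    unfolding Pi_space_def by blast
  show ?thesis using a by (rule that) (use w in blast)
qed

lemma Pi_space_nonempty: "f \<in> Pi_space G D st \<Longrightarrow> G \<noteq> {}"
  unfolding Pi_space_def pm_cauchy_def by blast

lemma Pi_space_star_le:
  assumes pm: "pm_space G D st" and ct: "continuous_triangle_fun st"
    and f: "f \<in> Pi_space G D st" and x: "x \<in> G" and y: "y \<in> G"
  shows "st (f x) (f y) \<le> D x y"
proof -
  obtain a where a: "pm_cauchy G D a" and w: "\<And>x. x \<in> G \<Longrightarrow> wconv (\<lambda>n. D (a n) x) (f x) sequentially"
    by (rule Pi_space_defining_sequence[OF f]) (rule that)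
  have aG: "\<And>n. a n \<in> G" by (rule pm_cauchy_in[OF a])
  note fD = Pi_spaceD(2)[OF f]
  show ?thesis
  proof (rule wconv_le_const)
    show "wconv (\<lambda>n. st (D (a n) x) (D (a n) y)) (st (f x) (f y)) sequentially"
      using pm_spaceD(2)[OF pm aG] fD x y by (intro continuous_triangle_funD[OF ct _ _ _ _ w w]) auto
    show "st (D (a n) x) (D (a n) y) \<le> D x y" for n
      using pm_spaceD(4)[OF pm aG x] pm_spaceD(5)[OF pm x aG y] by simp
  qed (use triangle_fun_closed[OF pm_spaceD(1)[OF pm] fD fD] pm_spaceD(2)[OF pm x y] x y in auto)
qed

lemma wconv_H0_along_defining_sequence:
  assumes pm: "pm_space G D st" and a: "pm_cauchy G D a"
    and w: "\<And>x. x \<in> G \<Longrightarrow> wconv (\<lambda>n. D (a n) x) (f x) sequentially"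
    and fD: "\<And>x. x \<in> G \<Longrightarrow> f x \<in> Delta_plus"
  shows "wconv (\<lambda>m. f (a m)) H0 sequentially"
proof -
  have aG: "\<And>n. a n \<in> G" by (rule pm_cauchy_in[OF a])
  have fa: "\<And>m. f (a m) \<in> Delta_plus" using fD aG by blast
  show ?thesis unfolding wconv_H0_iff[OF fa]
  proof (intro allI impI)
    fix \<eta> :: real assume "\<eta> > 0"
    then obtain N where N: "\<And>n p. n \<ge> N \<Longrightarrow> p \<ge> N \<Longrightarrow> near_H0 (\<eta> / 2) (D (a n) (a p))"
      using pm_cauchy_near_H0[OF pm a, of "\<eta> / 2"] by auto
    have "near_H0 \<eta> (f (a m))" if m: "m \<ge> N" for m
    proof -
      have "\<eta> / 2 < \<eta>" using \<open>\<eta> > 0\<close> by simp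
      then obtain s where s: "\<eta> / 2 < s" "s < \<eta>" "isCont (\<lambda>x. f (a m) (ereal x)) s"
        by (rule continuity_point_between[OF fa])
      have "(\<lambda>n. D (a n) (a m) (ereal s)) \<longlonglongrightarrow> f (a m) (ereal s)"
        using w[OF aG] s(3) unfolding wconv_def by blast
      moreover have "1 - \<eta> / 2 \<le> D (a n) (a m) (ereal s)" if "n \<ge> N" for n
      proof -
        have "D (a n) (a m) (ereal (\<eta> / 2)) \<le> D (a n) (a m) (ereal s)"
          using s(1) by (intro Delta_plus_mono[OF pm_spaceD(2)[OF pm aG aG]]) simp
        then show ?thesis using N[OF that m] unfolding near_H0_def by simp
      qed
      ultimately have "1 - \<eta> / 2 \<le> f (a m) (ereal s)" by (intro LIMSEQ_le_const) blast+
      also have "\<dots> \<le> f (a m) (ereal \<eta>)" using s(2) by (intro Delta_plus_mono[OF fa]) simp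
      finally show ?thesis unfolding near_H0_def using \<open>\<eta> > 0\<close> by simp
    qed
    then show "eventually (\<lambda>m. near_H0 \<eta> (f (a m))) sequentially"
      unfolding eventually_sequentially by blast
  qed
qed

lemma Pi_space_exists_near_H0:
  assumes pm: "pm_space G D st" and f: "f \<in> Pi_space G D st" and "\<eta> > 0"
  shows "\<exists>x\<in>G. near_H0 \<eta> (f x)"
proof -
  obtain a where a: "pm_cauchy G D a" "\<And>x. x \<in> G \<Longrightarrow> wconv (\<lambda>n. D (a n) x) (f x) sequentially"
    by (rule Pi_space_defining_sequence[OF f]) (rule that)
  have aG: "\<And>n. a n \<in> G" by (rule pm_cauchy_in[OF a(1)])
  have "wconv (\<lambda>m. f (a m)) H0 sequentially"
    by (rule wconv_H0_along_defining_sequence[OF pm a Pi_spaceD(2)[OF f]])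
  then have "eventually (\<lambda>m. near_H0 \<eta> (f (a m))) sequentially"
    using wconv_H0_iff[of "\<lambda>m. f (a m)"] Pi_spaceD(2)[OF f aG] \<open>\<eta> > 0\<close> by simp
  then show ?thesis using aG by (auto simp: eventually_sequentially)
qed

lemma pm_delta_in_Pi_space:
  assumes pm: "pm_space G D st" and a: "a \<in> G"
  shows "pm_delta G D a \<in> Pi_space G D st"
  unfolding Pi_space_def prob_lipschitz_def
proof (intro CollectI conjI ballI)
  show "pm_delta G D a \<in> extensional G" unfolding pm_delta_def by (rule restrict_extensional)
  fix x assume x: "x \<in> G"
  show "pm_delta G D a x \<in> Delta_plus" unfolding pm_delta_def using pm_spaceD(2)[OF pm x a] x by simp
  fix y assume y: "y \<in> G"
  show "st (D x y) (pm_delta G D a y) \<le> pm_delta G D a x"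
    unfolding pm_delta_def using pm_spaceD(5)[OF pm x y a] x y by simp
next
  have "pm_cauchy G D (\<lambda>n. a)"
    unfolding pm_cauchy_def using a pm_spaceD(3)[OF pm a a] by (simp add: wconv_const case_prod_beta')
  moreover have "\<forall>x\<in>G. wconv (\<lambda>n. D a x) (pm_delta G D a x) sequentially"
    unfolding pm_delta_def using pm_spaceD(4)[OF pm _ a] by (simp add: wconv_const)
  ultimately show "\<exists>b. pm_cauchy G D b \<and> (\<forall>x\<in>G. wconv (\<lambda>n. D (b n) x) (pm_delta G D a x) sequentially)"
    by blast
qed

lemma pm_cauchy_limit_in_Pi_space:
  assumes pm: "pm_space G D st" and ct: "continuous_triangle_fun st" and a: "pm_cauchy G D a"
  obtains g where "g \<in> Pi_space G D st" "\<And>x. x \<in> G \<Longrightarrow> wconv (\<lambda>n. D (a n) x) (g x) sequentially"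
proof -
  have tf: "triangle_fun st" by (rule pm_spaceD(1)[OF pm])
  have aG: "\<And>n. a n \<in> G" by (rule pm_cauchy_in[OF a])
  define g where
    "g = restrict (\<lambda>x. SOME F. F \<in> Delta_plus \<and> wconv (\<lambda>n. D (a n) x) F sequentially) G"
  have "g x \<in> Delta_plus \<and> wconv (\<lambda>n. D (a n) x) (g x) sequentially" if x: "x \<in> G" for x
  proof -
    obtain F where "F \<in> Delta_plus" "wconv (\<lambda>n. D (a n) x) F sequentially"
      by (rule pm_cauchy_wconv[OF pm ct a x])
    then have "\<exists>F. F \<in> Delta_plus \<and> wconv (\<lambda>n. D (a n) x) F sequentially" by blast
    from someI_ex[OF this] show ?thesis unfolding g_def using x by simp
  qed
  then have gD: "\<And>x. x \<in> G \<Longrightarrow> g x \<in> Delta_plus"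
    and gw: "\<And>x. x \<in> G \<Longrightarrow> wconv (\<lambda>n. D (a n) x) (g x) sequentially" by blast+
  have "st (D x y) (g y) \<le> g x" if x: "x \<in> G" and y: "y \<in> G" for x y
  proof (rule wconv_limit_le)
    show "wconv (\<lambda>n. st (D x y) (D (a n) y)) (st (D x y) (g y)) sequentially"
      using pm_spaceD(2)[OF pm x y] pm_spaceD(2)[OF pm aG y] gD[OF y]
      by (intro continuous_triangle_funD[OF ct _ _ _ _ wconv_const gw[OF y]])
    show "st (D x y) (D (a n) y) \<le> D (a n) x" for n
      using triangle_fun_commute[OF tf pm_spaceD(2)[OF pm x y] pm_spaceD(2)[OF pm aG y]]
        pm_spaceD(4)[OF pm x y] pm_spaceD(5)[OF pm aG y x] by simp
  qed (use triangle_fun_closed[OF tf pm_spaceD(2)[OF pm x y] gD[OF y]] gD[OF x] gw[OF x] in auto)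
  moreover have "g \<in> extensional G" unfolding g_def by simp
  ultimately have "g \<in> Pi_space G D st"
    unfolding Pi_space_def prob_lipschitz_def using a gD gw by blast
  then show ?thesis using gw by (rule that)
qed

section \<open>The probabilistic distance \<open>Dsup\<close>\<close>

lemma bdd_above_Delta_plus_values:
  "(\<And>i. i \<in> I \<Longrightarrow> A i \<in> Delta_plus) \<Longrightarrow> bdd_above ((\<lambda>i. A i t) ` I)"
  using Delta_plusD(3) by (intro bdd_aboveI[of _ 1]) force

lemma SUP_in_Delta_plus:
  assumes I: "I \<noteq> {}" and A: "\<And>i. i \<in> I \<Longrightarrow> A i \<in> Delta_plus"
  shows "(\<lambda>t. SUP i\<in>I. A i t) \<in> Delta_plus"
proof -
  define S where "S t = (SUP i\<in>I. A i t)" for t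
  have bdd: "bdd_above ((\<lambda>i. A i t) ` I)" for t
    by (rule bdd_above_Delta_plus_values) (rule A)
  have upper: "A i t \<le> S t" if "i \<in> I" for i t
    unfolding S_def using cSUP_upper[OF that bdd] .
  have mono: "S s \<le> S t" if "s \<le> t" for s t
    unfolding S_def
  proof (rule cSUP_mono[OF I bdd])
    fix i assume "i \<in> I"
    then show "\<exists>j\<in>I. A i s \<le> A j t" using Delta_plus_mono[OF A[OF \<open>i \<in> I\<close>] that] by blast
  qed
  have const: "S t = c" if "\<And>i. i \<in> I \<Longrightarrow> A i t = c" for t c
    unfolding S_def using I that by simp
  have "continuous (at_left t) (\<lambda>y. S (ereal y))" for t :: real
    unfolding continuous_within tendsto_iff
  proof (intro allI impI)
    fix e :: real assume "e > 0"
    then have "S (ereal t) - e < S (ereal t)" by simp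
    then obtain i where i: "i \<in> I" "S (ereal t) - e < A i (ereal t)"
      unfolding S_def using less_cSUP_iff[OF I bdd] by blast
    have "eventually (\<lambda>y. S (ereal t) - e < A i (ereal y)) (at_left t)"
      using Delta_plusD(7)[OF A[OF i(1)], of t] i(2) unfolding continuous_within by (rule order_tendstoD)
    moreover have "eventually (\<lambda>y. y < t) (at_left t)" by (simp add: eventually_at_filter)
    ultimately show "eventually (\<lambda>y. dist (S (ereal y)) (S (ereal t)) < e) (at_left t)"
    proof eventually_elim
      case (elim y)
      then show ?case
        using mono[of "ereal y" "ereal t"] upper[OF i(1), of "ereal y"] \<open>e > 0\<close>
        by (simp add: dist_real_def abs_if)
    qed
  qed
  moreover obtain i where "i \<in> I" using I by blast
  then have "0 \<le> S t" for t using Delta_plusD(2)[OF A] upper by (meson order_trans)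
  moreover have "S t \<le> 1" for t unfolding S_def using Delta_plusD(3)[OF A] by (intro cSUP_least[OF I])
  ultimately show ?thesis
    using Delta_plusD(4-6)[OF A] const mono
    unfolding Delta_plus_def distribution_fun_def S_def[symmetric] by (auto simp: mono_def)
qed

lemma wconv_SUP_if_approximated_from_below:
  fixes \<Phi> :: "nat \<Rightarrow> dfun"
  assumes I: "I \<noteq> {}" and A: "\<And>i. i \<in> I \<Longrightarrow> A i \<in> Delta_plus"
    and \<Phi>: "\<And>m. \<Phi> m \<in> Delta_plus" and upper: "\<And>m. \<Phi> m \<le> (\<lambda>t. SUP i\<in>I. A i t)"
    and lower: "\<And>i. i \<in> I \<Longrightarrow> \<exists>\<Psi>. (\<forall>m. \<Psi> m \<le> \<Phi> m) \<and> wconv \<Psi> (A i) sequentially"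
  shows "wconv \<Phi> (\<lambda>t. SUP i\<in>I. A i t) sequentially"
proof -
  define S where "S = (\<lambda>t. SUP i\<in>I. A i t)"
  have S: "S \<in> Delta_plus" unfolding S_def by (rule SUP_in_Delta_plus[OF I A])
  have "(\<lambda>m. \<Phi> m (ereal t)) \<longlonglongrightarrow> S (ereal t)" for t :: real
    unfolding tendsto_iff
  proof (intro allI impI)
    fix \<epsilon> :: real assume "\<epsilon> > 0"
    then have "S (ereal t) - \<epsilon> / 3 < S (ereal t)" by simp
    with Delta_plusD(7)[OF S, of t]
    have "eventually (\<lambda>y. S (ereal t) - \<epsilon> / 3 < S (ereal y)) (at_left t)"
      unfolding continuous_within by (rule order_tendstoD)
    then obtain b where b: "b < t" "\<And>y. b < y \<Longrightarrow> y < t \<Longrightarrow> S (ereal t) - \<epsilon> / 3 < S (ereal y)"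
      unfolding eventually_at_left_field by blast
    define s where "s = (b + t) / 2"
    have s: "b < s" "s < t" using b(1) unfolding s_def by simp_all
    have "S (ereal s) - \<epsilon> / 3 < S (ereal s)" using \<open>\<epsilon> > 0\<close> by simp
    then obtain i where i: "i \<in> I" "S (ereal s) - \<epsilon> / 3 < A i (ereal s)"
      unfolding S_def using less_cSUP_iff[OF I bdd_above_Delta_plus_values, of A] A by blast
    obtain s' where s': "s < s'" "s' < t" "isCont (\<lambda>y. A i (ereal y)) s'"
      by (rule continuity_point_between[OF A[OF i(1)] s(2)])
    obtain \<Psi> where \<Psi>: "\<And>m. \<Psi> m \<le> \<Phi> m" and w\<Psi>: "wconv \<Psi> (A i) sequentially"
      using lower[OF i(1)] by blast
    have "(\<lambda>m. \<Psi> m (ereal s')) \<longlonglongrightarrow> A i (ereal s')" using w\<Psi> s'(3) unfolding wconv_def by blast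
    moreover have "A i (ereal s') - \<epsilon> / 3 < A i (ereal s')" using \<open>\<epsilon> > 0\<close> by simp
    ultimately have "eventually (\<lambda>m. A i (ereal s') - \<epsilon> / 3 < \<Psi> m (ereal s')) sequentially"
      by (rule order_tendstoD)
    then show "eventually (\<lambda>m. dist (\<Phi> m (ereal t)) (S (ereal t)) < \<epsilon>) sequentially"
    proof eventually_elim
      case (elim m)
      have "\<Phi> m (ereal s') \<le> \<Phi> m (ereal t)"
        using s'(2) by (intro Delta_plus_mono[OF \<Phi>]) simp
      then have "\<Psi> m (ereal s') \<le> \<Phi> m (ereal t)" using le_funD[OF \<Psi>[of m], of "ereal s'"] by linarith
      moreover have "\<Phi> m (ereal t) \<le> S (ereal t)" using upper[of m] by (simp add: le_fun_def S_def)
      moreover have "A i (ereal s) \<le> A i (ereal s')"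
        using s'(1) by (intro Delta_plus_mono[OF A[OF i(1)]]) simp
      ultimately show ?case using elim i(2) b(2)[OF s] by (simp add: dist_real_def abs_if)
    qed
  qed
  then show ?thesis unfolding wconv_def S_def by blast
qed

lemma Dsup_in_Delta_plus:
  assumes "triangle_fun st" "G \<noteq> {}" "\<And>x. x \<in> G \<Longrightarrow> f x \<in> Delta_plus"
    "\<And>x. x \<in> G \<Longrightarrow> g x \<in> Delta_plus"
  shows "Dsup G st f g \<in> Delta_plus"
  unfolding Dsup_def using assms triangle_fun_closed[OF assms(1)] by (intro SUP_in_Delta_plus) auto

lemma Dsup_commute:
  assumes "triangle_fun st" "\<And>x. x \<in> G \<Longrightarrow> f x \<in> Delta_plus" "\<And>x. x \<in> G \<Longrightarrow> g x \<in> Delta_plus"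
  shows "Dsup G st f g = Dsup G st g f"
  unfolding Dsup_def using triangle_fun_commute[OF assms] by (intro ext SUP_cong refl) simp

lemma Dsup_upper:
  assumes "triangle_fun st" "\<And>x. x \<in> G \<Longrightarrow> f x \<in> Delta_plus"
    "\<And>x. x \<in> G \<Longrightarrow> g x \<in> Delta_plus" and x: "x \<in> G"
  shows "st (f x) (g x) \<le> Dsup G st f g"
proof -
  have "\<And>x. x \<in> G \<Longrightarrow> st (f x) (g x) \<in> Delta_plus" using triangle_fun_closed assms(1-3) by blast
  from bdd_above_Delta_plus_values[of G "\<lambda>x. st (f x) (g x)", OF this]
  show ?thesis unfolding le_fun_def Dsup_def using cSUP_upper[OF x] by blast
qed

lemma less_Dsup_D:
  assumes "triangle_fun st" "G \<noteq> {}" "\<And>x. x \<in> G \<Longrightarrow> f x \<in> Delta_plus"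
    "\<And>x. x \<in> G \<Longrightarrow> g x \<in> Delta_plus" and "r < Dsup G st f g u"
  shows "\<exists>x\<in>G. r < st (f x) (g x) u"
proof -
  have "\<And>x. x \<in> G \<Longrightarrow> st (f x) (g x) \<in> Delta_plus" using triangle_fun_closed assms(1,3,4) by blast
  from bdd_above_Delta_plus_values[of G "\<lambda>x. st (f x) (g x)", OF this]
  show ?thesis using assms(5) less_cSUP_iff[OF assms(2)] unfolding Dsup_def by blast
qed

lemma Dsup_pm_delta_left:
  assumes pm: "pm_space G D st" and a: "a \<in> G" and f: "f \<in> Pi_space G D st"
  shows "Dsup G st (pm_delta G D a) f = f a"
proof
  fix t
  note fD = Pi_spaceD(2)[OF f]
  have "Dsup G st (pm_delta G D a) f t = (SUP x\<in>G. st (D x a) (f x) t)"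
    unfolding Dsup_def pm_delta_def by (rule SUP_cong) simp_all
  also have "\<dots> = f a t"
  proof (rule cSup_eq_maximum)
    have "st (D a a) (f a) = f a"
      using pm_spaceD(3)[OF pm a a] triangle_fun_H0_left[OF pm_spaceD(1)[OF pm] fD[OF a]] by simp
    then show "f a t \<in> (\<lambda>x. st (D x a) (f x) t) ` G" using a by force
  next
    fix z assume "z \<in> (\<lambda>x. st (D x a) (f x) t) ` G"
    then obtain x where x: "x \<in> G" "z = st (D x a) (f x) t" by blast
    then show "z \<le> f a t"
      using Pi_spaceD(3)[OF f a x(1)] pm_spaceD(4)[OF pm x(1) a] by (simp add: le_fun_def)
  qed
  finally show "Dsup G st (pm_delta G D a) f t = f a t" .
qed

lemma Dsup_pm_delta:
  assumes pm: "pm_space G D st" and "a \<in> G" "b \<in> G"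
  shows "Dsup G st (pm_delta G D a) (pm_delta G D b) = D a b"
  using Dsup_pm_delta_left[OF pm \<open>a \<in> G\<close> pm_delta_in_Pi_space[OF pm \<open>b \<in> G\<close>]] \<open>a \<in> G\<close>
  by (simp add: pm_delta_def)

lemma Dsup_wconv_along_defining_sequence:
  assumes pm: "pm_space G D st" and ct: "continuous_triangle_fun st"
    and f: "f \<in> Pi_space G D st" and g: "g \<in> Pi_space G D st"
    and b: "pm_cauchy G D b" and wg: "\<And>x. x \<in> G \<Longrightarrow> wconv (\<lambda>n. D (b n) x) (g x) sequentially"
  shows "wconv (\<lambda>m. st (f (b m)) (g (b m))) (Dsup G st f g) sequentially"
  unfolding Dsup_def
proof (rule wconv_SUP_if_approximated_from_below)
  have tf: "triangle_fun st" by (rule pm_spaceD(1)[OF pm])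
  have bG: "\<And>n. b n \<in> G" by (rule pm_cauchy_in[OF b])
  note fD = Pi_spaceD(2)[OF f] and gD = Pi_spaceD(2)[OF g]
  show "G \<noteq> {}" using bG by blast
  show "st (f x) (g x) \<in> Delta_plus" if "x \<in> G" for x
    using that by (intro triangle_fun_closed[OF tf fD gD])
  show "st (f (b m)) (g (b m)) \<in> Delta_plus" for m
    by (intro triangle_fun_closed[OF tf fD gD] bG)
  show "st (f (b m)) (g (b m)) \<le> (\<lambda>t. SUP x\<in>G. st (f x) (g x) t)" for m
    using Dsup_upper[OF tf fD gD bG] unfolding Dsup_def .
  fix x assume x: "x \<in> G"
  have bx: "\<And>m. D (b m) x \<in> Delta_plus" using pm_spaceD(2)[OF pm bG x] .
  have w1: "wconv (\<lambda>m. st (D (b m) x) (f x)) (st (g x) (f x)) sequentially"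
    using bx fD[OF x] gD[OF x] by (intro continuous_triangle_funD[OF ct _ _ _ _ wg[OF x] wconv_const])
  have w2: "wconv (\<lambda>m. g (b m)) H0 sequentially"
    by (rule wconv_H0_along_defining_sequence[OF pm b wg gD])
  have "wconv (\<lambda>m. st (st (D (b m) x) (f x)) (g (b m))) (st (st (g x) (f x)) H0) sequentially"
    by (rule continuous_triangle_funD[OF ct _ _ _ _ w1 w2])
      (use triangle_fun_closed[OF tf bx fD[OF x]] triangle_fun_closed[OF tf gD[OF x] fD[OF x]] gD[OF bG]
        H0_in_Delta_plus in auto)
  moreover have "st (st (g x) (f x)) H0 = st (f x) (g x)"
    using triangle_fun_H0_right[OF tf triangle_fun_closed[OF tf gD[OF x] fD[OF x]]]
      triangle_fun_commute[OF tf gD[OF x] fD[OF x]] by simp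
  moreover have "st (st (D (b m) x) (f x)) (g (b m)) \<le> st (f (b m)) (g (b m))" for m
    using triangle_fun_mono_left[OF tf triangle_fun_closed[OF tf bx fD[OF x]] fD[OF bG] gD[OF bG]
        Pi_spaceD(3)[OF f bG x]] .
  ultimately show "\<exists>\<Psi>. (\<forall>m. \<Psi> m \<le> st (f (b m)) (g (b m))) \<and> wconv \<Psi> (st (f x) (g x)) sequentially"
    by (intro exI[of _ "\<lambda>m. st (st (D (b m) x) (f x)) (g (b m))"]) simp
qed

lemma Dsup_star_le:
  assumes pm: "pm_space G D st" and ct: "continuous_triangle_fun st"
    and f: "f \<in> Pi_space G D st" and g: "g \<in> Pi_space G D st" and z: "z \<in> G"
  shows "st (Dsup G st f g) (g z) \<le> f z"
proof -
  have tf: "triangle_fun st" by (rule pm_spaceD(1)[OF pm])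
  note fD = Pi_spaceD(2)[OF f] and gD = Pi_spaceD(2)[OF g]
  obtain b where b: "pm_cauchy G D b" and wg: "\<And>x. x \<in> G \<Longrightarrow> wconv (\<lambda>n. D (b n) x) (g x) sequentially"
    by (rule Pi_space_defining_sequence[OF g]) blast
  have bG: "\<And>n. b n \<in> G" by (rule pm_cauchy_in[OF b])
  have G: "G \<noteq> {}" using z by blast
  have S: "Dsup G st f g \<in> Delta_plus" by (rule Dsup_in_Delta_plus[OF tf G fD gD])
  have \<Phi>: "\<And>m. st (f (b m)) (g (b m)) \<in> Delta_plus" by (intro triangle_fun_closed[OF tf fD gD] bG)
  have bz: "\<And>m. D (b m) z \<in> Delta_plus" using pm_spaceD(2)[OF pm bG z] .
  show ?thesis
  proof (rule wconv_le_const)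
    show "wconv (\<lambda>m. st (st (f (b m)) (g (b m))) (D (b m) z)) (st (Dsup G st f g) (g z)) sequentially"
      using \<Phi> bz S gD[OF z]
      by (intro continuous_triangle_funD[OF ct _ _ _ _
            Dsup_wconv_along_defining_sequence[OF pm ct f g b wg] wg[OF z]])
    show "st (st (f (b m)) (g (b m))) (D (b m) z) \<le> f z" for m
    proof -
      have "st (st (f (b m)) (g (b m))) (D (b m) z) \<le> st (f (b m)) (D (b m) z)"
        by (rule triangle_fun_mono_left[OF tf \<Phi> fD[OF bG] bz triangle_fun_le_left[OF tf fD[OF bG] gD[OF bG]]])
      also have "\<dots> = st (D z (b m)) (f (b m))"
        using triangle_fun_commute[OF tf fD[OF bG] bz] pm_spaceD(4)[OF pm bG z] by simp
      also have "\<dots> \<le> f z" by (rule Pi_spaceD(3)[OF f z bG])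
      finally show ?thesis .
    qed
  qed (use triangle_fun_closed[OF tf S gD[OF z]] fD[OF z] in auto)
qed

lemma Dsup_triangle:
  assumes pm: "pm_space G D st" and ct: "continuous_triangle_fun st"
    and f: "f \<in> Pi_space G D st" and g: "g \<in> Pi_space G D st" and h: "h \<in> Pi_space G D st"
  shows "st (Dsup G st f g) (Dsup G st g h) \<le> Dsup G st f h"
proof -
  have tf: "triangle_fun st" by (rule pm_spaceD(1)[OF pm])
  have G: "G \<noteq> {}" by (rule Pi_space_nonempty[OF f])
  note fD = Pi_spaceD(2)[OF f] and gD = Pi_spaceD(2)[OF g] and hD = Pi_spaceD(2)[OF h]
  obtain c where c: "pm_cauchy G D c" and wh: "\<And>x. x \<in> G \<Longrightarrow> wconv (\<lambda>n. D (c n) x) (h x) sequentially"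
    by (rule Pi_space_defining_sequence[OF h]) blast
  have cG: "\<And>n. c n \<in> G" by (rule pm_cauchy_in[OF c])
  define S where "S = Dsup G st f g"
  have S: "S \<in> Delta_plus" unfolding S_def by (rule Dsup_in_Delta_plus[OF tf G fD gD])
  have \<Phi>: "\<And>m. st (g (c m)) (h (c m)) \<in> Delta_plus" by (intro triangle_fun_closed[OF tf gD hD] cG)
  show ?thesis unfolding S_def[symmetric]
  proof (rule wconv_le_const)
    show "wconv (\<lambda>m. st S (st (g (c m)) (h (c m)))) (st S (Dsup G st g h)) sequentially"
      using S \<Phi> Dsup_in_Delta_plus[OF tf G gD hD]
      by (intro continuous_triangle_funD[OF ct _ _ _ _ wconv_const
            Dsup_wconv_along_defining_sequence[OF pm ct g h c wh]])
    show "st S (st (g (c m)) (h (c m))) \<le> Dsup G st f h" for m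
    proof -
      have "st S (st (g (c m)) (h (c m))) = st (st S (g (c m))) (h (c m))"
        using triangle_fun_assoc[OF tf S gD[OF cG] hD[OF cG]] by simp
      also have "\<dots> \<le> st (f (c m)) (h (c m))"
        using Dsup_star_le[OF pm ct f g cG] unfolding S_def[symmetric]
        by (rule triangle_fun_mono_left[OF tf triangle_fun_closed[OF tf S gD[OF cG]] fD[OF cG] hD[OF cG]])
      also have "\<dots> \<le> Dsup G st f h" by (rule Dsup_upper[OF tf fD hD cG])
      finally show ?thesis .
    qed
  qed (use triangle_fun_closed[OF tf S Dsup_in_Delta_plus[OF tf G gD hD]]
        Dsup_in_Delta_plus[OF tf G fD hD] in auto)
qed

lemma Dsup_self:
  assumes pm: "pm_space G D st" and ct: "continuous_triangle_fun st" and f: "f \<in> Pi_space G D st"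
  shows "Dsup G st f f = H0"
proof (rule antisym)
  have tf: "triangle_fun st" by (rule pm_spaceD(1)[OF pm])
  have G: "G \<noteq> {}" by (rule Pi_space_nonempty[OF f])
  note fD = Pi_spaceD(2)[OF f]
  show "Dsup G st f f \<le> H0" by (rule Delta_plus_le_H0[OF Dsup_in_Delta_plus[OF tf G fD fD]])
  obtain a where a: "pm_cauchy G D a" and w: "\<And>x. x \<in> G \<Longrightarrow> wconv (\<lambda>n. D (a n) x) (f x) sequentially"
    by (rule Pi_space_defining_sequence[OF f]) blast
  have aG: "\<And>n. a n \<in> G" by (rule pm_cauchy_in[OF a])
  have wa: "wconv (\<lambda>m. f (a m)) H0 sequentially"
    by (rule wconv_H0_along_defining_sequence[OF pm a w fD])
  have "wconv (\<lambda>m. st (f (a m)) (f (a m))) (st H0 H0) sequentially"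
    using fD[OF aG] H0_in_Delta_plus by (intro continuous_triangle_funD[OF ct _ _ _ _ wa wa])
  then have "wconv (\<lambda>m. st (f (a m)) (f (a m))) H0 sequentially"
    using triangle_fun_H0_right[OF tf H0_in_Delta_plus] by simp
  from wconv_le_const[OF H0_in_Delta_plus Dsup_in_Delta_plus[OF tf G fD fD] this Dsup_upper[OF tf fD fD aG]]
  show "H0 \<le> Dsup G st f f" .
qed

section \<open>Completeness and density\<close>

lemma Dsup_eq_H0_imp_le:
  assumes pm: "pm_space G D st" and ct: "continuous_triangle_fun st"
    and f: "f \<in> Pi_space G D st" and g: "g \<in> Pi_space G D st"
    and H: "Dsup G st f g = H0" and y: "y \<in> G"
  shows "f y \<le> g y"
proof -
  have tf: "triangle_fun st" by (rule pm_spaceD(1)[OF pm])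
  have G: "G \<noteq> {}" by (rule Pi_space_nonempty[OF f])
  note fD = Pi_spaceD(2)[OF f] and gD = Pi_spaceD(2)[OF g]
  define r where "r k = inverse (real (Suc k))" for k
  have lt: "1 - r k < Dsup G st f g (ereal (r k))" for k
    unfolding H by (rule near_H0_H0[unfolded near_H0_def]) (simp add: r_def)
  have "\<exists>x\<in>G. 1 - r k < st (f x) (g x) (ereal (r k))" for k
    by (rule less_Dsup_D[of st G f g, OF tf G fD gD lt[of k]])
  then obtain xs where xs: "\<And>k. xs k \<in> G" "\<And>k. near_H0 (r k) (st (f (xs k)) (g (xs k)))"
    unfolding near_H0_def by metis
  define C where "C k = st (f (xs k)) (g (xs k))" for k
  have C: "\<And>k. C k \<in> Delta_plus" unfolding C_def by (intro triangle_fun_closed[OF tf fD gD] xs(1))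
  have "wconv C H0 sequentially"
    using C LIMSEQ_inverse_real_of_nat xs(2) unfolding C_def r_def by (rule wconv_H0I)
  then have "wconv (\<lambda>k. st (f y) (C k)) (st (f y) H0) sequentially"
    using fD[OF y] C H0_in_Delta_plus by (intro continuous_triangle_funD[OF ct _ _ _ _ wconv_const])
  then have w: "wconv (\<lambda>k. st (f y) (C k)) (f y) sequentially"
    using triangle_fun_H0_right[OF tf fD[OF y]] by simp
  have "st (f y) (C k) \<le> g y" for k
  proof -
    have x: "xs k \<in> G" by (rule xs(1))
    have "st (f y) (C k) = st (st (f y) (f (xs k))) (g (xs k))"
      unfolding C_def using triangle_fun_assoc[OF tf fD[OF y] fD[OF x] gD[OF x]] by simp
    also have "\<dots> \<le> st (D y (xs k)) (g (xs k))"
      by (rule triangle_fun_mono_left[OF tf triangle_fun_closed[OF tf fD[OF y] fD[OF x]]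
            pm_spaceD(2)[OF pm y x] gD[OF x] Pi_space_star_le[OF pm ct f y x]])
    also have "\<dots> \<le> g y" by (rule Pi_spaceD(3)[OF g y x])
    finally show ?thesis .
  qed
  with w show ?thesis using fD[OF y] gD[OF y] by (intro wconv_le_const[OF _ _ w]) auto
qed

lemma Dsup_eq_H0_iff:
  assumes pm: "pm_space G D st" and ct: "continuous_triangle_fun st"
    and f: "f \<in> Pi_space G D st" and g: "g \<in> Pi_space G D st"
  shows "Dsup G st f g = H0 \<longleftrightarrow> f = g"
proof
  assume H: "Dsup G st f g = H0"
  then have H': "Dsup G st g f = H0"
    using Dsup_commute[of st G f g, OF pm_spaceD(1)[OF pm] Pi_spaceD(2)[OF f] Pi_spaceD(2)[OF g]] by simp
  show "f = g"
  proof (rule extensionalityI[OF Pi_spaceD(1)[OF f] Pi_spaceD(1)[OF g]])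
    fix x assume "x \<in> G"
    show "f x = g x"
      using Dsup_eq_H0_imp_le[OF pm ct f g H \<open>x \<in> G\<close>] Dsup_eq_H0_imp_le[OF pm ct g f H' \<open>x \<in> G\<close>]
      by (rule antisym)
  qed
qed (use Dsup_self[OF pm ct f] in simp)

lemma pm_space_Pi_space:
  assumes pm: "pm_space G D st" and ct: "continuous_triangle_fun st"
  shows "pm_space (Pi_space G D st) (Dsup G st) st"
  unfolding pm_space_def
proof (intro conjI ballI)
  show tf: "triangle_fun st" by (rule pm_spaceD(1)[OF pm])
  fix f g h assume f: "f \<in> Pi_space G D st" and g: "g \<in> Pi_space G D st" and h: "h \<in> Pi_space G D st"
  show "Dsup G st f g \<in> Delta_plus"
    by (rule Dsup_in_Delta_plus[OF tf Pi_space_nonempty[OF f] Pi_spaceD(2)[OF f] Pi_spaceD(2)[OF g]])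
  show "Dsup G st f g = H0 \<longleftrightarrow> f = g" by (rule Dsup_eq_H0_iff[OF pm ct f g])
  show "Dsup G st f g = Dsup G st g f"
    by (rule Dsup_commute[OF tf Pi_spaceD(2)[OF f] Pi_spaceD(2)[OF g]])
  show "st (Dsup G st f g) (Dsup G st g h) \<le> Dsup G st f h" by (rule Dsup_triangle[OF pm ct f g h])
qed

lemma wconv_Dsup_pm_delta_H0:
  assumes pm: "pm_space G D st" and f: "f \<in> Pi_space G D st"
    and a: "pm_cauchy G D a" and w: "\<And>x. x \<in> G \<Longrightarrow> wconv (\<lambda>n. D (a n) x) (f x) sequentially"
  shows "wconv (\<lambda>n. Dsup G st (pm_delta G D (a n)) f) H0 sequentially"
  using wconv_H0_along_defining_sequence[OF pm a w Pi_spaceD(2)[OF f]]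
    Dsup_pm_delta_left[OF pm pm_cauchy_in[OF a] f] by simp

lemma pm_cauchy_if_pm_delta_cauchy:
  assumes pm: "pm_space G D st" and aG: "\<And>n. a n \<in> G"
    and "pm_cauchy (Pi_space G D st) (Dsup G st) (\<lambda>n. pm_delta G D (a n))"
  shows "pm_cauchy G D a"
  using assms(3) aG Dsup_pm_delta[OF pm aG aG] unfolding pm_cauchy_def by (simp add: case_prod_beta')

lemma pm_complete_Pi_space:
  assumes pm: "pm_space G D st" and ct: "continuous_triangle_fun st"
  shows "pm_complete (Pi_space G D st) (Dsup G st) st"
  unfolding pm_complete_def
proof (intro conjI allI impI)
  note pmP = pm_space_Pi_space[OF pm ct]
  show "pm_space (Pi_space G D st) (Dsup G st) st" by (rule pmP)
  fix fs assume fs: "pm_cauchy (Pi_space G D st) (Dsup G st) fs"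
  have fsP: "\<And>n. fs n \<in> Pi_space G D st" by (rule pm_cauchy_in[OF fs])
  define r where "r n = inverse (real (Suc n))" for n
  have "\<exists>x\<in>G. near_H0 (r n) (fs n x)" for n
    by (rule Pi_space_exists_near_H0[OF pm fsP]) (simp add: r_def)
  then obtain a where aG: "\<And>n. a n \<in> G" and near: "\<And>n. near_H0 (r n) (fs n (a n))" by metis
  define \<delta> where "\<delta> n = pm_delta G D (a n)" for n
  have \<delta>P: "\<And>n. \<delta> n \<in> Pi_space G D st" unfolding \<delta>_def by (rule pm_delta_in_Pi_space[OF pm aG])
  have \<delta>_fs: "Dsup G st (\<delta> n) (fs n) = fs n (a n)" for n
    unfolding \<delta>_def by (rule Dsup_pm_delta_left[OF pm aG fsP])
  have \<delta>_fs_H0: "wconv (\<lambda>n. Dsup G st (\<delta> n) (fs n)) H0 sequentially"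
    unfolding \<delta>_fs using Pi_spaceD(2)[OF fsP aG] LIMSEQ_inverse_real_of_nat near
    unfolding r_def by (rule wconv_H0I)
  then have "pm_cauchy (Pi_space G D st) (Dsup G st) \<delta>"
    by (rule pm_cauchy_if_asymptotic[OF pmP ct fs \<delta>P])
  then have a: "pm_cauchy G D a"
    unfolding \<delta>_def by (rule pm_cauchy_if_pm_delta_cauchy[OF pm aG])
  obtain g where g: "g \<in> Pi_space G D st"
    and wg: "\<And>x. x \<in> G \<Longrightarrow> wconv (\<lambda>n. D (a n) x) (g x) sequentially"
    by (rule pm_cauchy_limit_in_Pi_space[OF pm ct a]) blast
  have "wconv (\<lambda>n. Dsup G st (fs n) (\<delta> n)) H0 sequentially"
    using \<delta>_fs_H0 pm_spaceD(4)[OF pmP fsP \<delta>P] by simp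
  moreover have "wconv (\<lambda>n. Dsup G st (\<delta> n) g) H0 sequentially"
    unfolding \<delta>_def by (rule wconv_Dsup_pm_delta_H0[OF pm g a wg])
  ultimately have "wconv (\<lambda>n. Dsup G st (fs n) g) H0 sequentially"
    by (rule pm_wconv_H0_trans[OF pmP ct fsP \<delta>P g])
  with g show "\<exists>g\<in>Pi_space G D st. wconv (\<lambda>n. Dsup G st (fs n) g) H0 sequentially" by blast
qed

theorem mainTheorem11:
  fixes G :: "'a set" and D :: "'a \<Rightarrow> 'a \<Rightarrow> dfun" and st :: "dfun \<Rightarrow> dfun \<Rightarrow> dfun"
  assumes "pm_space G D st" and "continuous_triangle_fun st"
  shows "(\<forall>a\<in>G. \<forall>b\<in>G. Dsup G st (pm_delta G D a) (pm_delta G D b) = D a b)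
    \<and> pm_complete (Pi_space G D st) (Dsup G st) st
    \<and> (\<forall>f\<in>Pi_space G D st. \<exists>a. (\<forall>n. a n \<in> G \<and> pm_delta G D (a n) \<in> Pi_space G D st) \<and>
          wconv (\<lambda>n. Dsup G st (pm_delta G D (a n)) f) H0 sequentially)"
proof (intro conjI ballI)
  note pm = assms(1) and ct = assms(2)
  show "Dsup G st (pm_delta G D a) (pm_delta G D b) = D a b" if "a \<in> G" "b \<in> G" for a b
    using Dsup_pm_delta[OF pm that] .
  show "pm_complete (Pi_space G D st) (Dsup G st) st" by (rule pm_complete_Pi_space[OF pm ct])
  fix f assume f: "f \<in> Pi_space G D st"
  then obtain a where a: "pm_cauchy G D a"
    and w: "\<And>x. x \<in> G \<Longrightarrow> wconv (\<lambda>n. D (a n) x) (f x) sequentially"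
    by (rule Pi_space_defining_sequence) blast
  have "\<forall>n. a n \<in> G \<and> pm_delta G D (a n) \<in> Pi_space G D st"
    using pm_cauchy_in[OF a] pm_delta_in_Pi_space[OF pm pm_cauchy_in[OF a]] by blast
  with wconv_Dsup_pm_delta_H0[OF pm f a w]
  show "\<exists>a. (\<forall>n. a n \<in> G \<and> pm_delta G D (a n) \<in> Pi_space G D st) \<and>
      wconv (\<lambda>n. Dsup G st (pm_delta G D (a n)) f) H0 sequentially" by blast
qed

end
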